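(* Let $C\in(\frac{\beta u_0-1}{r},\frac{\beta u_0}{r})$ with $C<\xi_1(\beta)$. Then there exists a unique $z_f^C\in(0,d)$ such that the function $f_C=F_{z_f^C}\mathbf 1_{[0,z_f^C]}+G_{C,z_f^C}\mathbf 1_{(z_f^C,d]}$ solves Problem 1 with $f_C'(0)=0$ and $f_C(d)=C$. Moreover, the map $C\mapsto z_f^C$ is increasing and $z_f^{\xi_1(\beta)}=d$, where for $C=\xi_1(\beta)$ the quantity $z_f^C$ denotes the point $s\in(0,d]$ with $F_s(s)=G_{C,s}(s)$.
   Context: Fix $\mu\in\mathbb R$, $\sigma>0$, $u_0>0$, $r>0$, $\beta>0$, $d>0$. For $u\in[0,u_0]$ let $\theta_1(u)=\frac{\sqrt{(\mu-u)^2+2r\sigma^2}+(\mu-u)}{\sigma^2}$, $\theta_2(u)=\frac{\sqrt{(\mu-u)^2+2r\sigma^2}-(\mu-u)}{\sigma^2}$; write $\alpha_i=\theta_i(u_0)$, $\gamma_i=\theta_i(0)$ ($i=1,2$). Let $\xi_1(\beta)=\frac{\beta u_0}{r}-\beta\frac{e^{\alpha_1d}+\frac{\alpha_1}{\alpha_2}e^{-\alpha_2d}}{\alpha_1(e^{\alpha_1d}-e^{-\alpha_2d})}$. For $s\in(0,d]$ and real $C$ define on $[0,d]$ $$F_s(z)=\frac{\beta u_0}{r}-\beta\frac{e^{\alpha_1z}+\frac{\alpha_1}{\alpha_2}e^{-\alpha_2z}}{\alpha_1(e^{\alpha_1s}-e^{-\alpha_2s})},$$ $$G_{C,s}(z)=\frac{C\gamma_2e^{-\gamma_2(s-d)}-\beta}{\gamma_1e^{\gamma_1s}+\gamma_2e^{(\gamma_1+\gamma_2)d}e^{-\gamma_2s}}\big(e^{\gamma_1z}-e^{(\gamma_1+\gamma_2)d}e^{-\gamma_2z}\big)+Ce^{-\gamma_2(z-d)}.$$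 Problem 1: a bounded twice continuously differentiable function $f$ on $[0,d]$ satisfying $-rf(z)-\mu f'(z)+\frac{\sigma^2}{2}f''(z)+\sup_{u\in[0,u_0]}\{(\beta+f'(z))u\}=0$ for $z\in[0,d]$ (one-sided derivatives at endpoints). *)

theory Defs
  imports "HOL-Analysis.Analysis"
begin

definition theta1 :: "real \<Rightarrow> real \<Rightarrow> real \<Rightarrow> real \<Rightarrow> real" where
  "theta1 mu sg r u = (sqrt ((mu - u)^2 + 2 * r * sg^2) + (mu - u)) / sg^2"

definition theta2 :: "real \<Rightarrow> real \<Rightarrow> real \<Rightarrow> real \<Rightarrow> real" where
  "theta2 mu sg r u = (sqrt ((mu - u)^2 + 2 * r * sg^2) - (mu - u)) / sg^2"

definition xi1 :: "real \<Rightarrow> real \<Rightarrow> real \<Rightarrow> real \<Rightarrow> real \<Rightarrow> real \<Rightarrow> real" where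
  "xi1 mu sg u0 r beta d =
     (let a1 = theta1 mu sg r u0; a2 = theta2 mu sg r u0 in
      beta * u0 / r - beta * (exp (a1 * d) + a1 / a2 * exp (- a2 * d))
                         / (a1 * (exp (a1 * d) - exp (- a2 * d))))"

definition Ffun :: "real \<Rightarrow> real \<Rightarrow> real \<Rightarrow> real \<Rightarrow> real \<Rightarrow> real \<Rightarrow> real \<Rightarrow> real" where
  "Ffun mu sg u0 r beta s z =
     (let a1 = theta1 mu sg r u0; a2 = theta2 mu sg r u0 in
      beta * u0 / r - beta * (exp (a1 * z) + a1 / a2 * exp (- a2 * z))
                         / (a1 * (exp (a1 * s) - exp (- a2 * s))))"

definition Gfun :: "real \<Rightarrow> real \<Rightarrow> real \<Rightarrow> real \<Rightarrow> real \<Rightarrow> real \<Rightarrow> real \<Rightarrow> real \<Rightarrow> real" where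
  "Gfun mu sg r beta d C s z =
     (let g1 = theta1 mu sg r 0; g2 = theta2 mu sg r 0 in
      (C * g2 * exp (- g2 * (s - d)) - beta)
        / (g1 * exp (g1 * s) + g2 * exp ((g1 + g2) * d) * exp (- g2 * s))
        * (exp (g1 * z) - exp ((g1 + g2) * d) * exp (- g2 * z))
      + C * exp (- g2 * (z - d)))"

definition fC :: "real \<Rightarrow> real \<Rightarrow> real \<Rightarrow> real \<Rightarrow> real \<Rightarrow> real \<Rightarrow> real \<Rightarrow> real \<Rightarrow> real \<Rightarrow> real" where
  "fC mu sg u0 r beta d C s z =
     (if z \<le> s then Ffun mu sg u0 r beta s z else Gfun mu sg r beta d C s z)"

definition problem1_sol ::
  "real \<Rightarrow> real \<Rightarrow> real \<Rightarrow> real \<Rightarrow> real \<Rightarrow> real \<Rightarrow> (real \<Rightarrow> real) \<Rightarrow> (real \<Rightarrow> real) \<Rightarrow> (real \<Rightarrow> real) \<Rightarrow> bool"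
  where
  "problem1_sol mu sg u0 r beta d f f' f'' \<longleftrightarrow>
     bounded (f ` {0..d}) \<and>
     (\<forall>z\<in>{0..d}. (f has_real_derivative f' z) (at z within {0..d})) \<and>
     (\<forall>z\<in>{0..d}. (f' has_real_derivative f'' z) (at z within {0..d})) \<and>
     continuous_on {0..d} f'' \<and>
     (\<forall>z\<in>{0..d}. - r * f z - mu * f' z + sg^2 / 2 * f'' z
                  + Sup ((\<lambda>u. (beta + f' z) * u) ` {0..u0}) = 0)"

end

theory Submission
  imports Defs "HOL-Real_Asymp.Real_Asymp"
begin

(* Both pieces of f_C are explicit combinations of exponentials: F_s solves the linear ODE
   with control u0 and has F_s'(0) = 0, F_s'(s) = -beta, while G_{C,s} solves the ODE with
   control 0 and has G_{C,s}'(s) = -beta, G_{C,s}(d) = C.  So f_C is C^1 at the switching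
   point s exactly when F_s(s) = G_{C,s}(s), and then the ODEs force the second derivatives
   to agree as well.  That condition is linear in C and reads C = Phi s for an explicit Phi,
   which is strictly increasing on (0,d], tends to -infinity at 0 and equals xi_1(beta) at d;
   this gives existence, uniqueness and monotonicity of the switching point.  The HJB
   equation holds because beta + F_s' >= 0 on [0,s] and beta + G_{C,s}' <= 0 on [s,d]; the
   latter follows since G_{C,s}'' changes sign at most once, from - to +, so G_{C,s}' is
   bounded by its endpoint values -beta and G_{C,s}'(d) <= -beta. *)

lemma abs_less_sqrt_square_plus:
  fixes m c :: real
  assumes "c > 0"
  shows "\<bar>m\<bar> < sqrt (m\<^sup>2 + c)"
  using assms real_sqrt_less_mono[of "m\<^sup>2" "m\<^sup>2 + c"] by simp

lemma
  fixes mu sg r u :: real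
  assumes sg: "sg > 0" and r: "r > 0"
  shows theta1_pos: "theta1 mu sg r u > 0" and theta2_pos: "theta2 mu sg r u > 0"
    and theta1_gt: "mu - u < sg\<^sup>2 / 2 * theta1 mu sg r u"
    and theta2_gt: "u - mu < sg\<^sup>2 / 2 * theta2 mu sg r u"
proof -
  have "\<bar>mu - u\<bar> < sqrt ((mu - u)\<^sup>2 + 2 * r * sg\<^sup>2)"
    using sg r by (intro abs_less_sqrt_square_plus) simp
  then show "theta1 mu sg r u > 0" "theta2 mu sg r u > 0"
    "mu - u < sg\<^sup>2 / 2 * theta1 mu sg r u" "u - mu < sg\<^sup>2 / 2 * theta2 mu sg r u"
    using sg unfolding theta1_def theta2_def by (auto simp: abs_less_iff)
qed

lemma
  fixes mu sg r u :: real
  assumes sg: "sg > 0" and r: "r > 0"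
  shows theta_product: "r = sg\<^sup>2 / 2 * theta1 mu sg r u * theta2 mu sg r u"
    and theta_difference: "mu - u = sg\<^sup>2 / 2 * (theta1 mu sg r u - theta2 mu sg r u)"
proof -
  have "(sqrt ((mu - u)\<^sup>2 + 2 * r * sg\<^sup>2))\<^sup>2 = (mu - u)\<^sup>2 + 2 * r * sg\<^sup>2"
    using sg r by (intro real_sqrt_pow2) simp
  then show "r = sg\<^sup>2 / 2 * theta1 mu sg r u * theta2 mu sg r u"
    using sg unfolding theta1_def theta2_def by (simp add: field_simps power2_eq_square)
  show "mu - u = sg\<^sup>2 / 2 * (theta1 mu sg r u - theta2 mu sg r u)"
    using sg unfolding theta1_def theta2_def by (simp add: field_simps)
qed

definition exp_comb :: "real \<Rightarrow> real \<Rightarrow> real \<Rightarrow> real \<Rightarrow> real \<Rightarrow> real \<Rightarrow> real" where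
  "exp_comb c A B x y z = c + A * exp (x * z) + B * exp (- y * z)"

lemma exp_comb_has_real_derivative:
  "(exp_comb c A B x y has_real_derivative exp_comb 0 (A * x) (- (B * y)) x y z) (at z)"
  unfolding exp_comb_def[abs_def] by (auto intro!: derivative_eq_intros simp: algebra_simps)

lemma exp_comb_has_real_derivative2:
  "(exp_comb 0 (A * x) (- (B * y)) x y has_real_derivative exp_comb 0 (A * x\<^sup>2) (B * y\<^sup>2) x y z) (at z)"
  unfolding exp_comb_def[abs_def] by (auto intro!: derivative_eq_intros simp: algebra_simps power2_eq_square)

(* x and - y are the roots of k t^2 - m t - r. *)
lemma exp_comb_ode:
  assumes "r = k * x * y" and "m = k * (x - y)"
  shows "k * exp_comb 0 (A * x\<^sup>2) (B * y\<^sup>2) x y z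
    = r * exp_comb c A B x y z + m * exp_comb 0 (A * x) (- (B * y)) x y z - r * c"
  unfolding exp_comb_def assms by (simp add: algebra_simps power2_eq_square)

lemma has_real_derivative_paste:
  fixes f g f' g' :: "real \<Rightarrow> real"
  assumes f: "\<And>z. (f has_real_derivative f' z) (at z)" and g: "\<And>z. (g has_real_derivative g' z) (at z)"
    and "f s = g s" and "f' s = g' s"
  shows "((\<lambda>z. if z \<le> s then f z else g z) has_real_derivative (if z \<le> s then f' z else g' z)) (at z)"
proof -
  have "((\<lambda>z. if z \<in> {..s} then f z else g z) has_vector_derivative
      (if z \<in> {..s} then f' z else g' z)) (at z within UNIV)"
  proof (rule has_vector_derivative_If_within_closures[where T = "{s<..}"])
    show "(f has_vector_derivative f' z) (at z within {..s} \<union> (closure {..s} \<inter> closure {s<..}))"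
      using f by (simp add: has_real_derivative_iff_has_vector_derivative[symmetric] has_field_derivative_at_within)
    show "(g has_vector_derivative g' z) (at z within {s<..} \<union> (closure {..s} \<inter> closure {s<..}))"
      using g by (simp add: has_real_derivative_iff_has_vector_derivative[symmetric] has_field_derivative_at_within)
  qed (use assms in auto)
  then show ?thesis by (simp add: has_real_derivative_iff_has_vector_derivative)
qed

lemma Sup_mult_image_atLeastAtMost:
  fixes k u0 :: real
  assumes "u0 \<ge> 0"
  shows "Sup ((\<lambda>u. k * u) ` {0..u0}) = max 0 k * u0"
proof (rule cSup_eq_maximum)
  show "max 0 k * u0 \<in> (\<lambda>u. k * u) ` {0..u0}"
  proof (cases "k \<ge> 0")
    case True
    then show ?thesis using assms by (auto intro: image_eqI[of _ _ u0])
  next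
    case False
    then show ?thesis using assms by (auto intro: image_eqI[of _ _ 0])
  qed
  show "x \<le> max 0 k * u0" if "x \<in> (\<lambda>u. k * u) ` {0..u0}" for x
    using that assms by (auto simp: max_def intro: mult_left_mono mult_nonpos_nonneg)
qed

lemma le_max_endpoints_if_deriv_stays_pos:
  fixes g g' :: "real \<Rightarrow> real"
  assumes "a \<le> z" and "z \<le> b"
    and deriv: "\<And>x. (g has_real_derivative g' x) (at x)"
    and stays_pos: "\<And>x y. a \<le> x \<Longrightarrow> x \<le> y \<Longrightarrow> y \<le> b \<Longrightarrow> 0 < g' x \<Longrightarrow> 0 < g' y"
  shows "g z \<le> max (g a) (g b)"
proof (rule ccontr)
  assume "\<not> g z \<le> max (g a) (g b)"
  then have less: "g a < g z" "g b < g z" by auto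
  then have "a < z" "z < b" using assms(1,2) by (auto simp: le_less)
  obtain x where x: "a < x" "x < z" "g z - g a = (z - a) * g' x"
    using MVT2[OF \<open>a < z\<close> deriv] by blast
  have "0 < (z - a) * g' x" using x less(1) by simp
  then have "0 < g' x" using \<open>a < z\<close> by (simp add: zero_less_mult_iff)
  have "g z < g b"
  proof (rule DERIV_pos_imp_increasing[OF \<open>z < b\<close>])
    fix t assume "z \<le> t" "t \<le> b"
    then show "\<exists>y. (g has_real_derivative y) (at t) \<and> y > 0"
      using deriv stays_pos[of x t] x \<open>0 < g' x\<close> by auto
  qed
  with less show False by simp
qed

lemma eq_at_left_end_if_continuous_within:
  fixes f g :: "real \<Rightarrow> real"
  assumes "continuous (at s within {s..b}) f" and "s < b" and "isCont g s"
    and agree: "\<And>z. s < z \<Longrightarrow> z \<le> b \<Longrightarrow> f z = g z"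
  shows "f s = g s"
proof -
  have "(f \<longlongrightarrow> f s) (at_right s)"
    using assms(1) at_within_Icc_at_right[OF assms(2)] by (simp add: continuous_within)
  moreover have "eventually (\<lambda>z. f z = g z) (at_right s)"
    using eventually_at_right_real[OF assms(2)] by eventually_elim (use agree in auto)
  ultimately have "(g \<longlongrightarrow> f s) (at_right s)" by (rule Lim_transform_eventually)
  moreover have "(g \<longlongrightarrow> g s) (at_right s)"
    using assms(3) by (simp add: isCont_def filterlim_at_split)
  ultimately show ?thesis by (rule tendsto_unique[OF trivial_limit_at_right_real])
qed

lemma filterlim_minus_div_exp_minus_one_at_bot:
  fixes c k L :: real
  assumes "k > 0" and "L > 0"
  shows "filterlim (\<lambda>s. c - k / (exp (L * s) - 1)) at_bot (at_right 0)"
  using assms by real_asymp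

locale hjb_setting =
  fixes mu sg u0 r beta d :: real
  assumes sg_pos: "sg > 0" and u0_pos: "u0 > 0" and r_pos: "r > 0"
    and beta_pos: "beta > 0" and d_pos: "d > 0"
begin

abbreviation "F \<equiv> Ffun mu sg u0 r beta"
abbreviation "G \<equiv> Gfun mu sg r beta d"
abbreviation "f \<equiv> fC mu sg u0 r beta d"

definition "alpha1 = theta1 mu sg r u0"
definition "alpha2 = theta2 mu sg r u0"
definition "gamma1 = theta1 mu sg r 0"
definition "gamma2 = theta2 mu sg r 0"

lemma alpha1_pos: "alpha1 > 0" and alpha2_pos: "alpha2 > 0"
  and gamma1_pos: "gamma1 > 0" and gamma2_pos: "gamma2 > 0"
  unfolding alpha1_def alpha2_def gamma1_def gamma2_def
  using theta1_pos theta2_pos sg_pos r_pos by auto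

(* Never use these four equations as rewrite rules: alpha1, ..., gamma2 depend on r and mu,
   so rewriting r or mu loops. *)
lemma r_alpha: "r = sg\<^sup>2 / 2 * alpha1 * alpha2"
  unfolding alpha1_def alpha2_def by (rule theta_product[OF sg_pos r_pos])

lemma mu_alpha: "mu - u0 = sg\<^sup>2 / 2 * (alpha1 - alpha2)"
  unfolding alpha1_def alpha2_def by (rule theta_difference[OF sg_pos r_pos])

lemma r_gamma: "r = sg\<^sup>2 / 2 * gamma1 * gamma2"
  unfolding gamma1_def gamma2_def by (rule theta_product[OF sg_pos r_pos])

lemma mu_gamma: "mu = sg\<^sup>2 / 2 * (gamma1 - gamma2)"
  unfolding gamma1_def gamma2_def using theta_difference[OF sg_pos r_pos, of mu 0] by (simp only: diff_zero)

lemma u0_minus_mu_less: "u0 - mu < sg\<^sup>2 / 2 * alpha2"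
  unfolding alpha2_def by (rule theta2_gt[OF sg_pos r_pos])

lemma mu_less_gamma1: "mu < sg\<^sup>2 / 2 * gamma1"
  unfolding gamma1_def using theta1_gt[OF sg_pos r_pos, of mu 0] by (simp only: diff_zero)

definition "F_denom s = alpha1 * (exp (alpha1 * s) - exp (- alpha2 * s))"
definition "FA s = - beta / F_denom s"
definition "FB s = - beta * alpha1 / (alpha2 * F_denom s)"

definition "F' s = exp_comb 0 (FA s * alpha1) (- (FB s * alpha2)) alpha1 alpha2"
definition "F'' s = exp_comb 0 (FA s * alpha1\<^sup>2) (FB s * alpha2\<^sup>2) alpha1 alpha2"

lemma F_denom_pos: assumes "s > 0" shows "F_denom s > 0"
proof -
  have "0 < alpha1 * s" "0 < alpha2 * s" using assms alpha1_pos alpha2_pos by simp_all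
  then have "- alpha2 * s < alpha1 * s" by simp
  then show ?thesis unfolding F_denom_def using alpha1_pos by simp
qed

lemma F_eq: "F s z = beta * u0 / r - beta * (exp (alpha1 * z) + alpha1 / alpha2 * exp (- alpha2 * z)) / F_denom s"
  by (simp add: Ffun_def F_denom_def alpha1_def alpha2_def Let_def)

lemma F_exp_comb: "F s = exp_comb (beta * u0 / r) (FA s) (FB s) alpha1 alpha2"
  by (rule ext, cases "F_denom s = 0")
    (use alpha2_pos in \<open>simp_all add: F_eq exp_comb_def FA_def FB_def field_simps\<close>)

lemma F_deriv: "(F s has_real_derivative F' s z) (at z)"
  unfolding F_exp_comb F'_def by (rule exp_comb_has_real_derivative)

lemma F'_deriv: "(F' s has_real_derivative F'' s z) (at z)"
  unfolding F'_def F''_def by (rule exp_comb_has_real_derivative2)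

lemma F_ode: "sg\<^sup>2 / 2 * F'' s z = r * F s z + (mu - u0) * F' s z - beta * u0"
  unfolding F_exp_comb F'_def F''_def
  using exp_comb_ode[OF r_alpha mu_alpha, where c = "beta * u0 / r" and A = "FA s" and B = "FB s"] r_pos
  by simp

lemma F'_eq: "F' s z = beta * alpha1 * (exp (- alpha2 * z) - exp (alpha1 * z)) / F_denom s"
  by (cases "F_denom s = 0") (use alpha2_pos in \<open>simp_all add: F'_def exp_comb_def FA_def FB_def field_simps\<close>)

lemma F''_eq: "F'' s z = - beta * alpha1 * (alpha1 * exp (alpha1 * z) + alpha2 * exp (- alpha2 * z)) / F_denom s"
  by (cases "F_denom s = 0")
    (use alpha2_pos in \<open>simp_all add: F''_def exp_comb_def FA_def FB_def field_simps power2_eq_square\<close>)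

lemma F'_0: "F' s 0 = 0"
  unfolding F'_eq by simp

lemma F'_switch: assumes "s > 0" shows "F' s s = - beta"
proof -
  have "beta * alpha1 * (exp (- alpha2 * s) - exp (alpha1 * s)) = - beta * F_denom s"
    unfolding F_denom_def by (simp add: algebra_simps)
  then show ?thesis unfolding F'_eq using F_denom_pos[OF assms] by simp
qed

lemma F''_switch_neg: "s > 0 \<Longrightarrow> F'' s s < 0"
  unfolding F''_eq using F_denom_pos[of s] beta_pos alpha1_pos alpha2_pos
  by (intro divide_neg_pos) (auto intro!: mult_pos_pos add_pos_pos)

lemma F'_ge: assumes "0 \<le> z" and "z \<le> s" and "0 < s" shows "- beta \<le> F' s z"
proof -
  have D: "F_denom s > 0" using F_denom_pos[OF \<open>0 < s\<close>] .
  have "alpha1 * (exp (alpha1 * z) - exp (- alpha2 * z)) \<le> F_denom s"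
    unfolding F_denom_def using assms alpha1_pos alpha2_pos by (intro mult_left_mono diff_mono) auto
  then have "alpha1 * (exp (alpha1 * z) - exp (- alpha2 * z)) / F_denom s \<le> 1"
    using D by simp
  then have "- beta \<le> - beta * (alpha1 * (exp (alpha1 * z) - exp (- alpha2 * z)) / F_denom s)"
    using beta_pos mult_left_mono[of _ 1 beta] by (simp only: mult_minus_left neg_le_iff_le mult_1_right)
  also have "\<dots> = F' s z"
    unfolding F'_eq using D by (simp add: field_simps)
  finally show ?thesis .
qed

definition "G_denom s
  = gamma1 * exp (gamma1 * s) + gamma2 * exp ((gamma1 + gamma2) * d) * exp (- gamma2 * s)"
definition "GA C s = (C * gamma2 * exp (- gamma2 * (s - d)) - beta) / G_denom s"
definition "GB C s = C * exp (gamma2 * d) - GA C s * exp ((gamma1 + gamma2) * d)"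

definition "G' C s = exp_comb 0 (GA C s * gamma1) (- (GB C s * gamma2)) gamma1 gamma2"
definition "G'' C s = exp_comb 0 (GA C s * gamma1\<^sup>2) (GB C s * gamma2\<^sup>2) gamma1 gamma2"

lemma G_denom_pos: "G_denom s > 0"
  unfolding G_denom_def using gamma1_pos gamma2_pos by (intro add_pos_pos) auto

lemma exp_gamma2_shift: "exp (- gamma2 * (z - d)) = exp (gamma2 * d) * exp (- gamma2 * z)"
  by (simp add: exp_add[symmetric] algebra_simps)

lemma G_eq: "G C s z
  = GA C s * (exp (gamma1 * z) - exp ((gamma1 + gamma2) * d) * exp (- gamma2 * z)) + C * exp (- gamma2 * (z - d))"
  by (simp add: Gfun_def GA_def G_denom_def gamma1_def gamma2_def Let_def)

lemma G_exp_comb: "G C s = exp_comb 0 (GA C s) (GB C s) gamma1 gamma2"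
proof (rule ext)
  show "G C s z = exp_comb 0 (GA C s) (GB C s) gamma1 gamma2 z" for z
    unfolding G_eq exp_gamma2_shift exp_comb_def GB_def by (simp add: algebra_simps)
qed

lemma G_deriv: "(G C s has_real_derivative G' C s z) (at z)"
  unfolding G_exp_comb G'_def by (rule exp_comb_has_real_derivative)

lemma G'_deriv: "(G' C s has_real_derivative G'' C s z) (at z)"
  unfolding G'_def G''_def by (rule exp_comb_has_real_derivative2)

lemma G_ode: "sg\<^sup>2 / 2 * G'' C s z = r * G C s z + mu * G' C s z"
  unfolding G_exp_comb G'_def G''_def
  using exp_comb_ode[OF r_gamma mu_gamma, where c = 0 and A = "GA C s" and B = "GB C s"] by simp

lemma G_end: "G C s d = C"
proof -
  have "exp ((gamma1 + gamma2) * d) * exp (- gamma2 * d) = exp (gamma1 * d)"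
    by (simp add: exp_add[symmetric] algebra_simps)
  then show ?thesis
    unfolding G_exp_comb exp_comb_def GB_def by (simp add: algebra_simps exp_minus')
qed

lemma G'_switch: "G' C s s = - beta"
proof -
  have "G' C s s = GA C s * G_denom s - C * gamma2 * exp (gamma2 * d) * exp (- gamma2 * s)"
    unfolding G'_def exp_comb_def GB_def G_denom_def by (simp add: algebra_simps)
  also have "GA C s * G_denom s = C * gamma2 * exp (gamma2 * d) * exp (- gamma2 * s) - beta"
    unfolding GA_def exp_gamma2_shift using G_denom_pos[of s] by simp
  finally show ?thesis by simp
qed

lemma G''_pos_stays_pos:
  assumes "s \<le> x" and "x \<le> y" and neg: "G'' C s s < 0" and pos: "0 < G'' C s x"
  shows "0 < G'' C s y"
proof -
  define R where "R z = GA C s * gamma1\<^sup>2 * exp ((gamma1 + gamma2) * z) + GB C s * gamma2\<^sup>2" for z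
  have G''_R: "G'' C s z = exp (- gamma2 * z) * R z" for z
  proof -
    have "exp (gamma1 * z) = exp (- gamma2 * z) * exp ((gamma1 + gamma2) * z)"
      by (simp add: exp_add[symmetric] algebra_simps)
    then show ?thesis unfolding G''_def exp_comb_def R_def by (simp add: algebra_simps)
  qed
  have sign: "0 < G'' C s z \<longleftrightarrow> 0 < R z" "G'' C s z < 0 \<longleftrightarrow> R z < 0" for z
    unfolding G''_R by (simp_all add: zero_less_mult_iff mult_less_0_iff)
  have mono: "exp ((gamma1 + gamma2) * z1) \<le> exp ((gamma1 + gamma2) * z2)" if "z1 \<le> z2" for z1 z2
    using that gamma1_pos gamma2_pos by simp
  have "GA C s > 0"
  proof (rule ccontr)
    assume "\<not> GA C s > 0"
    then have "GA C s * gamma1\<^sup>2 \<le> 0" by (simp add: mult_nonpos_nonneg)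
    then have "R x \<le> R s"
      unfolding R_def using mult_left_mono_neg[OF mono[OF \<open>s \<le> x\<close>]] by simp
    with neg pos sign show False by simp
  qed
  then have "R x \<le> R y"
    unfolding R_def using mult_left_mono[OF mono[OF \<open>x \<le> y\<close>], of "GA C s * gamma1\<^sup>2"] by simp
  with pos sign show ?thesis by simp
qed

definition "F_diag_coeff = beta * (alpha1 + alpha2) / (alpha1 * alpha2)"

lemma F_diag_coeff_pos: "F_diag_coeff > 0"
  unfolding F_diag_coeff_def using beta_pos alpha1_pos alpha2_pos by simp

lemma F_diag_eq:
  assumes "s > 0"
  shows "F s s = beta * u0 / r - beta / alpha1 - F_diag_coeff / (exp ((alpha1 + alpha2) * s) - 1)"
proof -
  define e w where "e = exp (alpha1 * s)" and "w = exp (alpha2 * s)"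
  have ew: "exp ((alpha1 + alpha2) * s) = e * w"
    unfolding e_def w_def by (simp add: distrib_right exp_add)
  have em: "exp (- alpha2 * s) = 1 / w" unfolding w_def by (simp add: exp_minus')
  have "0 < (alpha1 + alpha2) * s" using assms alpha1_pos alpha2_pos by simp
  then have "1 < e * w" unfolding ew[symmetric] by simp
  then have "e * w - 1 \<noteq> 0" by simp
  moreover have "w \<noteq> 0" unfolding w_def by simp
  ultimately have "beta * (e + alpha1 / alpha2 * (1 / w)) / (alpha1 * (e - 1 / w))
      = beta / alpha1 + beta * (alpha1 + alpha2) / (alpha1 * alpha2) / (e * w - 1)"
    using alpha1_pos alpha2_pos by (simp add: field_simps)
  then show ?thesis
    unfolding F_eq F_denom_def F_diag_coeff_def ew em e_def[symmetric] by simp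
qed

lemma F_diag_strict_mono: "strict_mono_on {0<..} (\<lambda>s. F s s)"
proof (rule strict_mono_onI)
  fix s t :: real assume "s \<in> {0<..}" "t \<in> {0<..}" "s < t"
  define L where "L = alpha1 + alpha2"
  have "L > 0" unfolding L_def using alpha1_pos alpha2_pos by simp
  have "0 < exp (L * s) - 1" "exp (L * s) - 1 < exp (L * t) - 1"
    using \<open>s \<in> {0<..}\<close> \<open>s < t\<close> \<open>L > 0\<close> by simp_all
  then have "F_diag_coeff / (exp (L * t) - 1) < F_diag_coeff / (exp (L * s) - 1)"
    using F_diag_coeff_pos by (intro divide_strict_left_mono) auto
  then show "F s s < F t t"
    using F_diag_eq[of s] F_diag_eq[of t] \<open>s \<in> {0<..}\<close> \<open>t \<in> {0<..}\<close> unfolding L_def by simp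
qed

lemma F_diag_less: assumes "s > 0" shows "F s s < beta * mu / r"
proof -
  have "alpha1 * (u0 - mu) < alpha1 * (sg\<^sup>2 / 2 * alpha2)"
    using u0_minus_mu_less alpha1_pos by simp
  also have "\<dots> = sg\<^sup>2 / 2 * alpha1 * alpha2" by simp
  also note r_alpha[symmetric]
  finally have "(u0 - mu) / r < 1 / alpha1"
    using alpha1_pos r_pos by (simp add: field_simps)
  from mult_strict_left_mono[OF this beta_pos]
  have "beta * u0 / r - beta / alpha1 < beta * mu / r" by (simp add: diff_divide_distrib right_diff_distrib)
  moreover have "0 < F_diag_coeff / (exp ((alpha1 + alpha2) * s) - 1)"
    using assms alpha1_pos alpha2_pos F_diag_coeff_pos by simp
  ultimately show ?thesis unfolding F_diag_eq[OF assms] by linarith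
qed

lemma F_diag_at_bot: "filterlim (\<lambda>s. F s s) at_bot (at_right 0)"
proof -
  have "filterlim (\<lambda>s. beta * u0 / r - beta / alpha1 - F_diag_coeff / (exp ((alpha1 + alpha2) * s) - 1))
      at_bot (at_right 0)"
    using alpha1_pos alpha2_pos F_diag_coeff_pos by (intro filterlim_minus_div_exp_minus_one_at_bot) auto
  moreover have "eventually (\<lambda>s. beta * u0 / r - beta / alpha1
      - F_diag_coeff / (exp ((alpha1 + alpha2) * s) - 1) = F s s) (at_right 0)"
    using eventually_at_right_real[OF zero_less_one] by eventually_elim (simp add: F_diag_eq)
  ultimately show ?thesis by (rule filterlim_cong[OF refl refl, THEN iffD1, rotated])
qed

lemma beta_mu_less: "beta * mu / r < beta / gamma2"
proof -
  have "gamma2 * mu < gamma2 * (sg\<^sup>2 / 2 * gamma1)"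
    using mu_less_gamma1 gamma2_pos by simp
  also have "\<dots> = sg\<^sup>2 / 2 * gamma1 * gamma2" by simp
  also note r_gamma[symmetric]
  finally show ?thesis using beta_pos gamma2_pos r_pos by (simp add: field_simps)
qed

definition "M t = gamma1 * exp (- gamma2 * t) + gamma2 * exp (gamma1 * t)"

lemma M_pos: "M t > 0"
  unfolding M_def using gamma1_pos gamma2_pos by (intro add_pos_pos) auto

lemma M_mono: assumes "0 \<le> t" and "t \<le> t'" shows "M t \<le> M t'"
proof (rule DERIV_nonneg_imp_nondecreasing[OF \<open>t \<le> t'\<close>])
  fix x assume "t \<le> x"
  have "(M has_real_derivative gamma1 * gamma2 * (exp (gamma1 * x) - exp (- gamma2 * x))) (at x)"
    unfolding M_def[abs_def] by (auto intro!: derivative_eq_intros simp: algebra_simps)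
  moreover have "exp (- gamma2 * x) \<le> exp (gamma1 * x)"
  proof -
    have "0 \<le> gamma1 * x" "0 \<le> gamma2 * x" using \<open>0 \<le> t\<close> \<open>t \<le> x\<close> gamma1_pos gamma2_pos by simp_all
    then show ?thesis by simp
  qed
  ultimately show "\<exists>y. (M has_real_derivative y) (at x) \<and> y \<ge> 0"
    using gamma1_pos gamma2_pos by (intro exI conjI) auto
qed

lemma M_ge: "0 \<le> t \<Longrightarrow> gamma1 + gamma2 \<le> M t"
  using M_mono[of 0 t] by (simp add: M_def)

lemma exp_gamma1_d_split: "exp ((gamma1 + gamma2) * d) * exp (- gamma2 * s) * exp (- gamma2 * (d - s))
    = exp (gamma1 * s) * exp (gamma1 * (d - s))"
  by (simp only: exp_add[symmetric]) (simp add: algebra_simps)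

lemma exp_gamma2_shift_inverse: "exp (- gamma2 * (s - d)) * exp (- gamma2 * (d - s)) = 1"
  by (simp only: exp_add[symmetric]) (simp add: algebra_simps)

lemma G_denom_scaled:
  "G_denom s * exp (- gamma2 * (d - s)) = exp (gamma1 * s) * M (d - s)"
  using exp_gamma1_d_split[of s] unfolding G_denom_def M_def by algebra

lemma GA_scaled:
  "GA C s * exp (gamma1 * s) * M (d - s) = C * gamma2 - beta * exp (- gamma2 * (d - s))"
proof -
  have "GA C s * G_denom s = C * gamma2 * exp (- gamma2 * (s - d)) - beta"
    unfolding GA_def using G_denom_pos[of s] by simp
  then show ?thesis using G_denom_scaled[of s] exp_gamma2_shift_inverse[of s] by algebra
qed

lemma G_diag_scaled:
  "G C s s * exp (- gamma2 * (d - s))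
    = GA C s * exp (gamma1 * s) * (exp (- gamma2 * (d - s)) - exp (gamma1 * (d - s))) + C"
  using exp_gamma1_d_split[of s] exp_gamma2_shift_inverse[of s] unfolding G_eq by algebra

lemma G'_end_eq: "G' C s d = (gamma1 + gamma2) * GA C s * exp (gamma1 * s) * exp (gamma1 * (d - s)) - C * gamma2"
proof -
  have "exp (gamma2 * d) * exp (- gamma2 * d) = 1" "exp ((gamma1 + gamma2) * d) * exp (- gamma2 * d) = exp (gamma1 * d)"
    "exp (gamma1 * d) = exp (gamma1 * s) * exp (gamma1 * (d - s))"
    by (simp_all only: exp_add[symmetric]) (simp_all add: algebra_simps)
  then show ?thesis unfolding G'_def exp_comb_def GB_def by algebra
qed

lemma G_diag:
  "G C s s = (C * (gamma1 + gamma2) + beta * (exp (gamma1 * (d - s)) - exp (- gamma2 * (d - s)))) / M (d - s)"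
proof -
  define X Y A where "X = exp (gamma1 * (d - s))" and "Y = exp (- gamma2 * (d - s))"
    and "A = GA C s * exp (gamma1 * s)"
  have "G C s s * M (d - s) * Y = (C * (gamma1 + gamma2) + beta * (X - Y)) * Y"
  proof -
    have "G C s s * Y = A * (Y - X) + C" unfolding X_def Y_def A_def by (rule G_diag_scaled)
    moreover have "A * M (d - s) = C * gamma2 - beta * Y" unfolding A_def Y_def by (rule GA_scaled)
    moreover have "M (d - s) = gamma1 * Y + gamma2 * X" unfolding M_def X_def Y_def by simp
    ultimately show ?thesis by algebra
  qed
  then have "G C s s * M (d - s) = C * (gamma1 + gamma2) + beta * (X - Y)"
    unfolding Y_def by simp
  then show ?thesis unfolding X_def Y_def using M_pos[of "d - s"] by (simp add: eq_divide_eq)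
qed

(* The terminal value C for which F_s and G_{C,s} agree at s (F_eq_G_iff); the switching
   point z_f of the theorem is the inverse of Phi. *)
definition "Phi s = (F s s - beta / gamma2) * M (d - s) / (gamma1 + gamma2)
    + beta / gamma2 * exp (- gamma2 * (d - s))"

lemma Phi_scaled:
  "Phi s * (gamma1 + gamma2) = F s s * M (d - s) - beta * (exp (gamma1 * (d - s)) - exp (- gamma2 * (d - s)))"
proof -
  define X Y b where "X = exp (gamma1 * (d - s))" and "Y = exp (- gamma2 * (d - s))"
    and "b = beta / gamma2"
  have M: "M (d - s) = gamma1 * Y + gamma2 * X" unfolding M_def X_def Y_def by simp
  have "gamma1 + gamma2 \<noteq> 0" using gamma1_pos gamma2_pos by simp
  then have "Phi s * (gamma1 + gamma2) = (F s s - b) * M (d - s) + b * Y * (gamma1 + gamma2)"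
    unfolding Phi_def b_def Y_def by (simp add: distrib_right)
  also have "\<dots> = F s s * M (d - s) - b * gamma2 * (X - Y)"
    unfolding M by algebra
  also have "b * gamma2 = beta" unfolding b_def using gamma2_pos by simp
  finally show ?thesis unfolding X_def Y_def .
qed

lemma F_eq_G_iff: "F s s = G C s s \<longleftrightarrow> Phi s = C"
proof -
  have "F s s = G C s s \<longleftrightarrow> F s s * M (d - s)
      = C * (gamma1 + gamma2) + beta * (exp (gamma1 * (d - s)) - exp (- gamma2 * (d - s)))"
    unfolding G_diag using M_pos[of "d - s"] by (simp add: eq_divide_eq)
  also have "\<dots> \<longleftrightarrow> Phi s * (gamma1 + gamma2) = C * (gamma1 + gamma2)"
    unfolding Phi_scaled by linarith
  also have "\<dots> \<longleftrightarrow> Phi s = C" using gamma1_pos gamma2_pos by simp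
  finally show ?thesis .
qed

lemma Phi_strict_mono: "strict_mono_on {0<..d} Phi"
proof (rule strict_mono_onI)
  fix s t assume s: "s \<in> {0<..d}" and t: "t \<in> {0<..d}" and "s < t"
  have "F s s - beta / gamma2 < 0" using F_diag_less[of s] beta_mu_less s by simp
  moreover have "M (d - t) \<le> M (d - s)" using M_mono[of "d - t" "d - s"] t \<open>s < t\<close> by simp
  ultimately have "(F s s - beta / gamma2) * M (d - s) \<le> (F s s - beta / gamma2) * M (d - t)"
    by (auto intro: mult_left_mono_neg)
  also have "\<dots> < (F t t - beta / gamma2) * M (d - t)"
    using strict_mono_onD[OF F_diag_strict_mono, of s t] s t \<open>s < t\<close> M_pos[of "d - t"] by simp
  finally have "(F s s - beta / gamma2) * M (d - s) / (gamma1 + gamma2)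
      < (F t t - beta / gamma2) * M (d - t) / (gamma1 + gamma2)"
    using gamma1_pos gamma2_pos by (simp add: divide_strict_right_mono)
  moreover have "beta / gamma2 * exp (- gamma2 * (d - s)) < beta / gamma2 * exp (- gamma2 * (d - t))"
  proof (rule mult_strict_left_mono)
    have "gamma2 * (d - t) < gamma2 * (d - s)" using \<open>s < t\<close> gamma2_pos by simp
    then show "exp (- gamma2 * (d - s)) < exp (- gamma2 * (d - t))" by simp
  qed (use beta_pos gamma2_pos in simp)
  ultimately show "Phi s < Phi t" unfolding Phi_def by simp
qed

lemma Phi_le_F_diag: assumes "0 < s" and "s \<le> d" shows "Phi s \<le> F s s"
proof -
  have "F s s - beta / gamma2 < 0" using F_diag_less[OF assms(1)] beta_mu_less by simp
  moreover have "1 \<le> M (d - s) / (gamma1 + gamma2)"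
    using M_ge[of "d - s"] assms gamma1_pos gamma2_pos by simp
  ultimately have "(F s s - beta / gamma2) * (M (d - s) / (gamma1 + gamma2)) \<le> F s s - beta / gamma2"
    using mult_left_mono_neg[of 1] by fastforce
  moreover have "beta / gamma2 * exp (- gamma2 * (d - s)) \<le> beta / gamma2 * 1"
  proof (rule mult_left_mono)
    have "0 \<le> gamma2 * (d - s)" using assms gamma2_pos by simp
    then show "exp (- gamma2 * (d - s)) \<le> 1" by simp
  qed (use beta_pos gamma2_pos in simp)
  ultimately show ?thesis unfolding Phi_def by simp
qed

lemma Phi_end: "Phi d = xi1 mu sg u0 r beta d"
proof -
  have "F d d = xi1 mu sg u0 r beta d" by (simp add: Ffun_def xi1_def)
  moreover have "M 0 = gamma1 + gamma2" by (simp add: M_def)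
  ultimately show ?thesis unfolding Phi_def using gamma1_pos gamma2_pos by simp
qed

lemma Phi_isCont: assumes "s > 0" shows "isCont Phi s"
  using F_denom_pos[OF assms] gamma1_pos gamma2_pos alpha2_pos
  unfolding Phi_def[abs_def] F_eq F_denom_def M_def by (intro continuous_intros) auto

lemma Phi_attains: assumes "C < xi1 mu sg u0 r beta d" shows "\<exists>s\<in>{0<..<d}. Phi s = C"
proof -
  have "eventually (\<lambda>s. F s s \<le> C - 1) (at_right 0)"
    using F_diag_at_bot by (simp add: filterlim_at_bot)
  moreover have "eventually (\<lambda>s. s \<in> {0<..<d}) (at_right 0)"
    by (rule eventually_at_right_real[OF d_pos])
  ultimately have "eventually (\<lambda>s. F s s \<le> C - 1 \<and> s \<in> {0<..<d}) (at_right 0)"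
    by (rule eventually_conj)
  then obtain s0 where s0: "F s0 s0 < C" "s0 \<in> {0<..<d}"
    using eventually_happens'[of "at_right (0::real)"] by (force simp: trivial_limit_def[symmetric])
  then have "Phi s0 < C" using Phi_le_F_diag[of s0] by fastforce
  moreover have "C < Phi d" using assms Phi_end by simp
  ultimately obtain s where "s0 \<le> s" "s \<le> d" "Phi s = C"
    using IVT[of Phi s0 C d] Phi_isCont s0 by fastforce
  with \<open>Phi s0 < C\<close> \<open>C < Phi d\<close> s0 show ?thesis
    by (intro bexI[of _ s]) (auto simp: le_less)
qed

lemma G''_switch: assumes "0 < s" and "F s s = G C s s" shows "G'' C s s = F'' s s"
proof -
  have "sg\<^sup>2 / 2 * G'' C s s = sg\<^sup>2 / 2 * F'' s s"
    unfolding G_ode F_ode G'_switch F'_switch[OF assms(1)] assms(2) by (simp add: algebra_simps)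
  then show ?thesis using sg_pos by simp
qed

lemma gamma_mu_eq: "gamma1 * gamma2 * mu = r * (gamma1 - gamma2)"
proof -
  have "gamma1 * gamma2 * mu = gamma1 * gamma2 * (sg\<^sup>2 / 2 * (gamma1 - gamma2))"
    by (rule arg_cong[OF mu_gamma])
  also have "\<dots> = sg\<^sup>2 / 2 * gamma1 * gamma2 * (gamma1 - gamma2)" by simp
  also have "\<dots> = r * (gamma1 - gamma2)" by (rule arg_cong[OF r_gamma[symmetric]])
  finally show ?thesis .
qed

lemma Phi_gamma_bound:
  assumes "0 < s"
  shows "Phi s * gamma1 * gamma2 * (gamma1 + gamma2) \<le> beta * ((gamma1 - gamma2) * M (d - s)
    - gamma1 * gamma2 * (exp (gamma1 * (d - s)) - exp (- gamma2 * (d - s))))"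
proof -
  define X Y where "X = exp (gamma1 * (d - s))" and "Y = exp (- gamma2 * (d - s))"
  have "gamma1 * gamma2 * F s s < gamma1 * gamma2 * (beta * mu / r)"
    using mult_strict_left_mono[OF F_diag_less[OF assms], of "gamma1 * gamma2"] gamma1_pos gamma2_pos
    by simp
  also have "\<dots> = beta * (gamma1 * gamma2 * mu) / r" by simp
  also have "\<dots> = beta * (gamma1 - gamma2)" unfolding gamma_mu_eq using r_pos by simp
  finally have F_bound: "gamma1 * gamma2 * F s s * M (d - s) \<le> beta * (gamma1 - gamma2) * M (d - s)"
    using M_pos[of "d - s"] by (simp add: mult_right_mono)
  have Phi_S: "Phi s * (gamma1 + gamma2) = F s s * M (d - s) - beta * (X - Y)"
    unfolding X_def Y_def by (rule Phi_scaled)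
  have "Phi s * gamma1 * gamma2 * (gamma1 + gamma2) = gamma1 * gamma2 * (Phi s * (gamma1 + gamma2))"
    by (simp add: ac_simps)
  also have "\<dots> = gamma1 * gamma2 * F s s * M (d - s) - beta * gamma1 * gamma2 * (X - Y)"
    unfolding Phi_S by (simp add: algebra_simps)
  also have "\<dots> \<le> beta * ((gamma1 - gamma2) * M (d - s) - gamma1 * gamma2 * (X - Y))"
    using F_bound by (simp add: algebra_simps)
  finally show ?thesis unfolding X_def Y_def .
qed

lemma G'_end_le: assumes "0 < s" and "s \<le> d" shows "G' (Phi s) s d \<le> - beta"
proof -
  define X Y S where "X = exp (gamma1 * (d - s))" and "Y = exp (- gamma2 * (d - s))"
    and "S = gamma1 + gamma2"
  define Mt where "Mt = M (d - s)"
  have Mt: "Mt = gamma1 * Y + gamma2 * X" unfolding Mt_def M_def X_def Y_def by simp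
  have "Y \<le> 1" "1 \<le> X" unfolding X_def Y_def using assms gamma1_pos gamma2_pos by simp_all
  have "S \<le> Mt" "0 < Mt" "0 < S"
    unfolding Mt_def S_def using M_ge[of "d - s"] M_pos assms gamma1_pos gamma2_pos by auto
  have Phi_bound: "Phi s * gamma1 * gamma2 * S \<le> beta * ((gamma1 - gamma2) * Mt - gamma1 * gamma2 * (X - Y))"
    using Phi_gamma_bound[OF assms(1)] unfolding S_def Mt_def X_def Y_def .
  have "(G' (Phi s) s d + beta) * Mt * S
      = Phi s * gamma1 * gamma2 * S * (X - Y) + beta * S * (Mt - S * X * Y)"
  proof -
    have "GA (Phi s) s * exp (gamma1 * s) * Mt = Phi s * gamma2 - beta * Y"
      unfolding Mt_def Y_def by (rule GA_scaled)
    moreover have "G' (Phi s) s d = S * GA (Phi s) s * exp (gamma1 * s) * X - Phi s * gamma2"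
      unfolding S_def X_def by (rule G'_end_eq)
    ultimately show ?thesis unfolding S_def Mt by algebra
  qed
  also have "\<dots> \<le> beta * ((gamma1 - gamma2) * Mt - gamma1 * gamma2 * (X - Y)) * (X - Y) + beta * S * (Mt - S * X * Y)"
    using Phi_bound \<open>Y \<le> 1\<close> \<open>1 \<le> X\<close> by (intro add_right_mono mult_right_mono) auto
  also have "\<dots> = beta * Mt * (S - Mt)"
    unfolding S_def Mt by algebra
  also have "\<dots> \<le> 0"
    using beta_pos \<open>0 < Mt\<close> \<open>S \<le> Mt\<close> by (simp add: mult_nonpos_nonneg mult_nonneg_nonpos)
  finally have "(G' (Phi s) s d + beta) * (Mt * S) \<le> 0" by (simp add: mult.assoc)
  then show ?thesis using \<open>0 < Mt\<close> \<open>0 < S\<close> by (simp add: mult_le_0_iff)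
qed

lemma G'_le: assumes "0 < s" and "s \<le> z" and "z \<le> d" shows "G' (Phi s) s z \<le> - beta"
proof -
  have "F s s = G (Phi s) s s" using F_eq_G_iff by simp
  then have neg: "G'' (Phi s) s s < 0" using G''_switch F''_switch_neg assms(1) by simp
  have "G' (Phi s) s z \<le> max (G' (Phi s) s s) (G' (Phi s) s d)"
    using assms(2,3) G'_deriv G''_pos_stays_pos[OF _ _ neg] by (rule le_max_endpoints_if_deriv_stays_pos)
  then show ?thesis using G'_switch G'_end_le assms by simp
qed

definition "fC' C s = (\<lambda>z. if z \<le> s then F' s z else G' C s z)"
definition "fC'' C s = (\<lambda>z. if z \<le> s then F'' s z else G'' C s z)"

lemma fC_eq: "f C s = (\<lambda>z. if z \<le> s then F s z else G C s z)"
  by (rule ext) (simp add: fC_def)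

lemma fC_deriv: assumes "0 < s" shows "(f (Phi s) s has_real_derivative fC' (Phi s) s z) (at z)"
  unfolding fC_eq fC'_def
  by (rule has_real_derivative_paste[OF F_deriv G_deriv])
    (simp_all add: F_eq_G_iff F'_switch[OF assms] G'_switch)

lemma fC'_deriv: assumes "0 < s" shows "(fC' (Phi s) s has_real_derivative fC'' (Phi s) s z) (at z)"
  unfolding fC'_def fC''_def
  by (rule has_real_derivative_paste[OF F'_deriv G'_deriv])
    (simp_all add: F'_switch[OF assms] G'_switch G''_switch[OF assms] F_eq_G_iff)

lemma fC''_continuous: assumes "0 < s" shows "continuous_on {0..d} (fC'' (Phi s) s)"
  unfolding fC''_def
proof (rule continuous_on_cases_le[where h = "\<lambda>z. z"])
  show "continuous_on {z \<in> {0..d}. z \<le> s} (F'' s)"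
    unfolding F''_def exp_comb_def[abs_def] by (intro continuous_intros)
  show "continuous_on {z \<in> {0..d}. s \<le> z} (G'' (Phi s) s)"
    unfolding G''_def exp_comb_def[abs_def] by (intro continuous_intros)
  show "F'' s z = G'' (Phi s) s z" if "z \<in> {0..d}" "z = s" for z
    using that G''_switch[OF assms] F_eq_G_iff by simp
qed (rule continuous_on_id)

lemma fC_hjb:
  assumes "0 < s" and "s \<le> d" and "z \<in> {0..d}"
  shows "- r * f (Phi s) s z - mu * fC' (Phi s) s z + sg\<^sup>2 / 2 * fC'' (Phi s) s z
    + Sup ((\<lambda>u. (beta + fC' (Phi s) s z) * u) ` {0..u0}) = 0"
proof (cases "z \<le> s")
  case True
  then have "0 \<le> beta + F' s z" using F'_ge[of z s] assms by simp
  then show ?thesis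
    using True F_ode[of s z] unfolding fC_eq fC'_def fC''_def Sup_mult_image_atLeastAtMost[OF less_imp_le[OF u0_pos]]
    by (simp add: algebra_simps)
next
  case False
  then have "beta + G' (Phi s) s z \<le> 0" using G'_le[of s z] assms by simp
  then show ?thesis
    using False G_ode[of "Phi s" s z] unfolding fC_eq fC'_def fC''_def Sup_mult_image_atLeastAtMost[OF less_imp_le[OF u0_pos]]
    by (simp add: algebra_simps)
qed

lemma fC_problem1_sol:
  assumes "0 < s" and "s \<le> d"
  shows "problem1_sol mu sg u0 r beta d (f (Phi s) s) (fC' (Phi s) s) (fC'' (Phi s) s)"
proof -
  have "continuous_on {0..d} (f (Phi s) s)"
    using fC_deriv[OF assms(1)] by (intro continuous_at_imp_continuous_on) (auto intro: DERIV_isCont)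
  then have "bounded (f (Phi s) s ` {0..d})"
    by (intro compact_imp_bounded compact_continuous_image compact_Icc)
  then show ?thesis
    unfolding problem1_sol_def
    using fC_deriv[OF assms(1)] fC'_deriv[OF assms(1)] fC''_continuous[OF assms(1)] fC_hjb[OF assms]
    by (auto intro: has_field_derivative_at_within)
qed

lemma problem1_sol_imp_Phi:
  assumes "0 < s" and "s < d" and "problem1_sol mu sg u0 r beta d (f C s) f' f''"
  shows "Phi s = C"
proof -
  have "(f C s has_real_derivative f' s) (at s within {0..d})"
    using assms unfolding problem1_sol_def by auto
  then have "continuous (at s within {s..d}) (f C s)"
    using assms(1) by (intro continuous_within_subset[OF DERIV_continuous]) auto
  then have "f C s s = G C s s"
    by (rule eq_at_left_end_if_continuous_within[OF _ \<open>s < d\<close> DERIV_isCont[OF G_deriv]])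
      (simp add: fC_def)
  then show ?thesis using F_eq_G_iff by (simp add: fC_def)
qed

lemma fC_solves_iff:
  assumes "0 < s" and "s < d"
  shows "(\<exists>f' f''. problem1_sol mu sg u0 r beta d (f C s) f' f'' \<and> f' 0 = 0 \<and> f C s d = C)
    \<longleftrightarrow> Phi s = C"
proof
  assume "\<exists>f' f''. problem1_sol mu sg u0 r beta d (f C s) f' f'' \<and> f' 0 = 0 \<and> f C s d = C"
  then show "Phi s = C" using problem1_sol_imp_Phi assms by blast
next
  assume "Phi s = C"
  moreover have "fC' (Phi s) s 0 = 0" using assms by (simp add: fC'_def F'_0)
  moreover have "f (Phi s) s d = Phi s" using assms by (simp add: fC_def G_end)
  ultimately show "\<exists>f' f''. problem1_sol mu sg u0 r beta d (f C s) f' f'' \<and> f' 0 = 0 \<and> f C s d = C"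
    using fC_problem1_sol assms by fastforce
qed

end

theorem proposition4p5:
  fixes mu sg u0 r beta d :: real
  assumes "sg > 0" and "u0 > 0" and "r > 0" and "beta > 0" and "d > 0"
  defines "adm \<equiv> {C. (beta * u0 - 1) / r < C \<and> C < beta * u0 / r
                       \<and> C < xi1 mu sg u0 r beta d}"
  defines "good \<equiv> (\<lambda>C s. \<exists>f' f''.
             problem1_sol mu sg u0 r beta d (fC mu sg u0 r beta d C s) f' f''
             \<and> f' 0 = 0 \<and> fC mu sg u0 r beta d C s d = C)"
  defines "zf \<equiv> (\<lambda>C. THE s. s \<in> {0<..<d} \<and> good C s)"
  shows "(\<forall>C\<in>adm. \<exists>!s. s \<in> {0<..<d} \<and> good C s)
         \<and> (\<forall>C1\<in>adm. \<forall>C2\<in>adm. C1 < C2 \<longrightarrow> zf C1 < zf C2)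
         \<and> (\<forall>s\<in>{0<..d}.
              Ffun mu sg u0 r beta s s
                = Gfun mu sg r beta d (xi1 mu sg u0 r beta d) s s
              \<longleftrightarrow> s = d)"
proof -
  interpret hjb_setting mu sg u0 r beta d using assms(1-5) by unfold_locales
  have good_iff: "good C s \<longleftrightarrow> Phi s = C" if "s \<in> {0<..<d}" for C s
    unfolding good_def using fC_solves_iff that by simp
  have unique: "\<exists>!s. s \<in> {0<..<d} \<and> good C s" if C: "C \<in> adm" for C
  proof -
    obtain s where "s \<in> {0<..<d}" "Phi s = C"
      using Phi_attains C unfolding adm_def by blast
    then show ?thesis
      using good_iff strict_mono_on_eq[OF Phi_strict_mono] by (intro ex1I[of _ s]) auto
  qed
  have zf: "zf C \<in> {0<..<d} \<and> Phi (zf C) = C" if "C \<in> adm" for C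
    using theI'[OF unique[OF that]] good_iff unfolding zf_def by blast
  have "zf C1 < zf C2" if "C1 \<in> adm" "C2 \<in> adm" "C1 < C2" for C1 C2
    using zf[OF that(1)] zf[OF that(2)] that(3) strict_mono_on_less[OF Phi_strict_mono, of "zf C1" "zf C2"] by auto
  moreover have "F s s = G (xi1 mu sg u0 r beta d) s s \<longleftrightarrow> s = d" if "s \<in> {0<..d}" for s
    using F_eq_G_iff Phi_end strict_mono_on_eq[OF Phi_strict_mono, of s d] that d_pos by auto
  ultimately show ?thesis using unique by blast
qed

end
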